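(* Let $\mathcal{M}=(W,E,V)$ be a playable coalition model, $w\in W$, $C\subseteq N$, and $s\in\{0,1\}^2$. Then the fiber $(\nu^w_C)^{-1}(s)=\{X\subseteq W\mid\nu^w_C(X)=s\}$ is order-convex in $(\mathcal{P}(W),\subseteq)$, i.e. whenever $X\subseteq Y\subseteq Z$ and $X,Z$ belong to it, so does $Y$.
   Context: $N$ is a finite set of agents. A coalition model is $\mathcal{M}=(W,E,V)$ with $W$ nonempty and $E_w(C)\subseteq\mathcal{P}(W)$ for each $w\in W$, $C\subseteq N$. Write $\overline{X}=W\setminus X$. $E_w$ is playable if for all $C,D\subseteq N$, $X,Y\subseteq W$: (i) $\emptyset\notin E_w(C)$; (ii) $W\in E_w(C)$; (iii) if $X\in E_w(C)$ and $X\subseteq Y$ then $Y\in E_w(C)$; (iv) if $C\cap D=\emptyset$, $X\in E_w(C)$, $Y\in E_w(D)$ then $X\cap Y\in E_w(C\cup D)$; (v) $X\notin E_w(\emptyset)$ iff $\overline{X}\in E_w(N)$; the model is playable if each $E_w$ is. The strategic value is $\nu^w_C(X)=(a,b)\in\{0,1\}^2$ with $a=1$ iff $X\in E_w(C)$, $b=1$ iff $\overline{X}\in E_w(C)$ (the four values $(1,1),(1,0),(0,1),(0,0)$ are called $\mathrm{FC},\mathrm{PD},\mathrm{AD},\mathrm{FI}$). *)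

theory Defs
  imports Main
begin

text \<open>A coalition model over agents N and states W: effectivity function E w C \<subseteq> Pow W.
  The valuation V plays no role here.\<close>

definition playable_at :: "'a set \<Rightarrow> 'w set \<Rightarrow> ('w \<Rightarrow> 'a set \<Rightarrow> 'w set set) \<Rightarrow> 'w \<Rightarrow> bool" where
  "playable_at N W E w \<longleftrightarrow>
     (\<forall>C\<subseteq>N. {} \<notin> E w C) \<and>
     (\<forall>C\<subseteq>N. W \<in> E w C) \<and>
     (\<forall>C\<subseteq>N. \<forall>X Y. X \<in> E w C \<and> X \<subseteq> Y \<and> Y \<subseteq> W \<longrightarrow> Y \<in> E w C) \<and>
     (\<forall>C\<subseteq>N. \<forall>D\<subseteq>N. \<forall>X Y. C \<inter> D = {} \<and> X \<in> E w C \<and> Y \<in> E w D \<longrightarrow> X \<inter> Y \<in> E w (C \<union> D)) \<and>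
     (\<forall>X\<subseteq>W. X \<notin> E w {} \<longleftrightarrow> W - X \<in> E w N)"

definition coalition_model :: "'a set \<Rightarrow> 'w set \<Rightarrow> ('w \<Rightarrow> 'a set \<Rightarrow> 'w set set) \<Rightarrow> bool" where
  "coalition_model N W E \<longleftrightarrow> finite N \<and> W \<noteq> {} \<and>
     (\<forall>w\<in>W. \<forall>C\<subseteq>N. E w C \<subseteq> Pow W)"

definition playable_model :: "'a set \<Rightarrow> 'w set \<Rightarrow> ('w \<Rightarrow> 'a set \<Rightarrow> 'w set set) \<Rightarrow> bool" where
  "playable_model N W E \<longleftrightarrow> coalition_model N W E \<and> (\<forall>w\<in>W. playable_at N W E w)"

definition strategic_value :: "'w set \<Rightarrow> ('w \<Rightarrow> 'a set \<Rightarrow> 'w set set) \<Rightarrow> 'w \<Rightarrow> 'a set \<Rightarrow> 'w set \<Rightarrow> bool \<times> bool" where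
  "strategic_value W E w C X = (X \<in> E w C, W - X \<in> E w C)"

end

theory Submission
  imports Defs
begin

text \<open>Both coordinates of \<open>\<nu>\<^sup>w\<^sub>C\<close> are
  membership tests for the upward-closed family \<open>E w C\<close>, the first applied to \<open>X\<close> and the
  second to its complement; complementation reverses \<open>X \<subseteq> Y \<subseteq> Z\<close>, and membership in an
  upward-closed family is constant on any chain whose two ends agree.\<close>

lemma playable_at_upward_closed:
  assumes "playable_at N W E w" and "C \<subseteq> N"
    and "X \<in> E w C" and "X \<subseteq> Y" and "Y \<subseteq> W"
  shows "Y \<in> E w C"
proof -
  have "\<forall>C\<subseteq>N. \<forall>X Y. X \<in> E w C \<and> X \<subseteq> Y \<and> Y \<subseteq> W \<longrightarrow> Y \<in> E w C"
    using assms(1) unfolding playable_at_def by (elim conjE)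
  then show ?thesis
    using assms(2-5) by blast
qed

lemma upward_closed_mem_between:
  assumes up: "\<And>A B. A \<in> F \<Longrightarrow> A \<subseteq> B \<Longrightarrow> B \<subseteq> W \<Longrightarrow> B \<in> F"
    and "X \<subseteq> Y" and "Y \<subseteq> Z" and "Z \<subseteq> W"
    and "X \<in> F \<longleftrightarrow> Z \<in> F"
  shows "Y \<in> F \<longleftrightarrow> X \<in> F"
  using up[of X Y] up[of Y Z] assms(2-5) by (meson order_trans)

theorem mainTheorem10:
  fixes N :: "'a set" and W :: "'w set" and E :: "'w \<Rightarrow> 'a set \<Rightarrow> 'w set set"
    and w :: 'w and C :: "'a set" and s :: "bool \<times> bool" and X Y Z :: "'w set"
  assumes "playable_model N W E" and "w \<in> W" and "C \<subseteq> N"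
    and "X \<subseteq> Y" and "Y \<subseteq> Z" and "Z \<subseteq> W"
    and "strategic_value W E w C X = s" and "strategic_value W E w C Z = s"
  shows "strategic_value W E w C Y = s"
proof -
  have "playable_at N W E w"
    using assms(1,2) unfolding playable_model_def by simp
  then have up: "\<And>A B. A \<in> E w C \<Longrightarrow> A \<subseteq> B \<Longrightarrow> B \<subseteq> W \<Longrightarrow> B \<in> E w C"
    using assms(3) by (rule playable_at_upward_closed)
  have ends: "X \<in> E w C \<longleftrightarrow> Z \<in> E w C" "W - X \<in> E w C \<longleftrightarrow> W - Z \<in> E w C"
    using assms(7,8) unfolding strategic_value_def by auto
  have mem_Y: "Y \<in> E w C \<longleftrightarrow> X \<in> E w C"
    using up assms(4-6) ends(1) by (rule upward_closed_mem_between)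
  have compl_chain: "W - Z \<subseteq> W - Y" "W - Y \<subseteq> W - X" "W - X \<subseteq> W"
    using assms(4,5) by auto
  have compl_mem_Y: "W - Y \<in> E w C \<longleftrightarrow> W - Z \<in> E w C"
    using up compl_chain ends(2)[symmetric] by (rule upward_closed_mem_between)
  show ?thesis
    using mem_Y compl_mem_Y ends(2) assms(7) unfolding strategic_value_def by auto
qed

end
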